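(* For $n\ge1$ and $k\ge1$, the number of plane trees with $n$ edges and exactly $k$ old leaves is $$\frac{2^{n-2k+1}}{k}\binom{n-1}{2k-2}\binom{2k-2}{k-1}.$$
   Context: A plane tree is a rooted tree in which the children of each vertex are linearly ordered (left to right). A leaf is a vertex with no children; by convention the tree consisting of a single vertex (no edges) has no leaves. A leaf is an old leaf if it is the leftmost child of its parent, and a young leaf otherwise. *)

theory Defs
  imports Complex_Main
begin

datatype ptree = Node "ptree list"

fun edges :: "ptree \<Rightarrow> nat" where
  "edges (Node cs) = length cs + sum_list (map edges cs)"

text \<open>Number of old leaves: leaves that are the leftmost child of their parent.
  The single-vertex tree has no leaves (it is never a child), so it has no old leaves.\<close>
fun old_leaves :: "ptree \<Rightarrow> nat" where
  "old_leaves (Node cs) =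
     (case cs of [] \<Rightarrow> 0 | c # _ \<Rightarrow> (if c = Node [] then 1 else 0))
     + sum_list (map old_leaves cs)"

end

theory Submission
  imports Defs
begin

(* Count forests, i.e. lists of trees none of which is a single vertex, by
   their number n of edges, k of old leaves and h of trees. Deleting the edge
   from the root of the first tree to its last child either removes an old
   leaf together with the then isolated root, or keeps h and k (the child was
   an only child but not a leaf, or a young leaf), or splits the child's
   subtree off as a new second tree. Hence
     F(n+1, k, h+1) = F(n, k-1, h) + 2 F(n, k, h+1) + F(n, k, h+2),
   which is solved by a power of 2 times a binomial coefficient times a
   ballot number; for a single tree the ballot number is a Catalan number. *)

definition forests :: "nat \<Rightarrow> nat \<Rightarrow> nat \<Rightarrow> ptree list set" where
  "forests n k h = {ts. length ts = h \<and> Node [] \<notin> set ts \<and>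
     sum_list (map edges ts) = n \<and> sum_list (map old_leaves ts) = k}"

fun cons_edge :: "ptree list \<Rightarrow> ptree list" where
  "cons_edge ts = Node [Node []] # ts"

fun plant_first :: "ptree list \<Rightarrow> ptree list" where
  "plant_first (t # ts) = Node [t] # ts"

fun add_young_leaf :: "ptree list \<Rightarrow> ptree list" where
  "add_young_leaf (Node cs # ts) = Node (cs @ [Node []]) # ts"

fun graft_second :: "ptree list \<Rightarrow> ptree list" where
  "graft_second (Node cs # u # ts) = Node (cs @ [u]) # ts"

lemma edges_eq_0_iff: "edges t = 0 \<longleftrightarrow> t = Node []"
  by (cases t) auto

lemma old_leaves_snoc:
  "cs \<noteq> [] \<Longrightarrow> old_leaves (Node (cs @ [c])) = old_leaves (Node cs) + old_leaves c"
  by (cases cs) auto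

lemma forests_SucE:
  assumes "ts \<in> forests n k (Suc h)"
  obtains cs r where "ts = Node cs # r" "cs \<noteq> []"
proof -
  obtain t r where "ts = t # r" "t \<noteq> Node []"
    using assms by (cases ts) (auto simp: forests_def)
  moreover obtain cs where "t = Node cs" by (cases t)
  ultimately show thesis using that by auto
qed

lemma forests_Suc_SucE:
  assumes "ts \<in> forests n k (Suc (Suc h))"
  obtains cs u r where "ts = Node cs # u # r" "cs \<noteq> []" "u \<noteq> Node []"
proof -
  obtain cs r where ts: "ts = Node cs # r" "cs \<noteq> []"
    using assms by (rule forests_SucE)
  moreover obtain u r' where "r = u # r'" "u \<noteq> Node []"
    using assms ts by (cases r) (auto simp: forests_def)
  ultimately show thesis using that by auto
qed

lemma forests_0: "forests 0 k h = (if h = 0 \<and> k = 0 then {[]} else {})"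
proof -
  have "ts \<in> forests 0 k h \<longleftrightarrow> ts = [] \<and> h = 0 \<and> k = 0" for ts
    by (cases ts) (auto simp: forests_def edges_eq_0_iff)
  then show ?thesis by auto
qed

lemma forests_Suc_0: "forests (Suc n) k 0 = {}"
  by (auto simp: forests_def)

lemma forests_Suc_Suc:
  "forests (Suc n) k (Suc h) =
     (if k = 0 then {} else cons_edge ` forests n (k - 1) h)
     \<union> plant_first ` forests n k (Suc h)
     \<union> add_young_leaf ` forests n k (Suc h)
     \<union> graft_second ` forests n k (Suc (Suc h))"
  (is "?L = ?R")
proof
  show "?L \<subseteq> ?R"
  proof
    fix ts assume ts: "ts \<in> ?L"
    then obtain cs c r where ts_eq: "ts = Node (cs @ [c]) # r"
      by (metis forests_SucE rev_exhaust)
    consider "cs = []" "c = Node []" | "cs = []" "c \<noteq> Node []"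
      | "cs \<noteq> []" "c = Node []" | "cs \<noteq> []" "c \<noteq> Node []"
      by blast
    then show "ts \<in> ?R"
    proof cases
      case 1
      then have "r \<in> forests n (k - 1) h" "k \<noteq> 0" "ts = cons_edge r"
        using ts ts_eq by (auto simp: forests_def)
      then show ?thesis by auto
    next
      case 2
      then have "c # r \<in> forests n k (Suc h)" "ts = plant_first (c # r)"
        using ts ts_eq by (auto simp: forests_def)
      then show ?thesis by blast
    next
      case 3
      then have "Node cs # r \<in> forests n k (Suc h)" "ts = add_young_leaf (Node cs # r)"
        using ts ts_eq old_leaves_snoc[of cs c] by (auto simp: forests_def)
      then show ?thesis by blast
    next
      case 4
      then have "Node cs # c # r \<in> forests n k (Suc (Suc h))"
        "ts = graft_second (Node cs # c # r)"
        using ts ts_eq old_leaves_snoc[of cs c] by (auto simp: forests_def)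
      then show ?thesis by blast
    qed
  qed
next
  have "cons_edge r \<in> ?L" if "r \<in> forests n (k - 1) h" "k \<noteq> 0" for r
    using that by (auto simp: forests_def)
  moreover have "plant_first ts \<in> ?L" if "ts \<in> forests n k (Suc h)" for ts
    using that by (cases ts) (auto simp: forests_def)
  moreover have "add_young_leaf ts \<in> ?L" if ts_in: "ts \<in> forests n k (Suc h)" for ts
  proof -
    obtain cs r where "ts = Node cs # r" "cs \<noteq> []"
      by (rule forests_SucE[OF ts_in])
    then show ?thesis
      using ts_in old_leaves_snoc[of cs "Node []"] by (auto simp: forests_def)
  qed
  moreover have "graft_second ts \<in> ?L" if ts_in: "ts \<in> forests n k (Suc (Suc h))" for ts
  proof -
    obtain cs u r where "ts = Node cs # u # r" "cs \<noteq> []"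
      by (rule forests_Suc_SucE[OF ts_in])
    then show ?thesis
      using ts_in old_leaves_snoc[of cs u] by (auto simp: forests_def)
  qed
  ultimately show "?R \<subseteq> ?L" by (auto split: if_splits)
qed

lemma finite_forests: "finite (forests n k h)"
proof (induction n arbitrary: k h)
  case 0
  then show ?case by (simp add: forests_0)
next
  case (Suc n)
  then show ?case by (cases h) (simp_all add: forests_Suc_0 forests_Suc_Suc)
qed

fun first_shape :: "ptree list \<Rightarrow> bool \<times> bool" where
  "first_shape (Node cs # ts) = (2 \<le> length cs, last cs = Node [])"

lemma first_shape_plant_first:
  "ts \<in> forests n k (Suc h) \<Longrightarrow> first_shape (plant_first ts) = (False, False)"
  by (cases ts) (auto simp: forests_def)

lemma first_shape_add_young_leaf:
  "ts \<in> forests n k (Suc h) \<Longrightarrow> first_shape (add_young_leaf ts) = (True, True)"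
  by (erule forests_SucE) (auto simp: Suc_le_eq)

lemma first_shape_graft_second:
  "ts \<in> forests n k (Suc (Suc h)) \<Longrightarrow> first_shape (graft_second ts) = (True, False)"
  by (erule forests_Suc_SucE) (auto simp: Suc_le_eq)

lemma inj_on_cons_edge: "inj_on cons_edge A"
  by (simp add: inj_on_def)

lemma inj_on_plant_first: "inj_on plant_first (forests n k (Suc h))"
  by (rule inj_onI, erule forests_SucE, erule forests_SucE) auto

lemma inj_on_add_young_leaf: "inj_on add_young_leaf (forests n k (Suc h))"
  by (rule inj_onI, erule forests_SucE, erule forests_SucE) auto

lemma inj_on_graft_second: "inj_on graft_second (forests n k (Suc (Suc h)))"
  by (rule inj_onI, erule forests_Suc_SucE, erule forests_Suc_SucE) auto

lemma card_forests_Suc_Suc: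
  "card (forests (Suc n) k (Suc h)) =
     (if k = 0 then 0 else card (forests n (k - 1) h))
     + 2 * card (forests n k (Suc h)) + card (forests n k (Suc (Suc h)))"
proof -
  define A1 where "A1 = (if k = 0 then {} else cons_edge ` forests n (k - 1) h)"
  define A2 where "A2 = plant_first ` forests n k (Suc h)"
  define A3 where "A3 = add_young_leaf ` forests n k (Suc h)"
  define A4 where "A4 = graft_second ` forests n k (Suc (Suc h))"
  have finite: "finite A1" "finite A2" "finite A3" "finite A4"
    by (simp_all add: A1_def A2_def A3_def A4_def finite_forests)
  have "first_shape ` A1 \<subseteq> {(False, True)}" "first_shape ` A2 \<subseteq> {(False, False)}"
    "first_shape ` A3 \<subseteq> {(True, True)}" "first_shape ` A4 \<subseteq> {(True, False)}"
    by (auto simp: A1_def A2_def A3_def A4_def first_shape_plant_first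
        first_shape_add_young_leaf first_shape_graft_second)
  then have disjoint: "A1 \<inter> A2 = {}" "(A1 \<union> A2) \<inter> A3 = {}" "(A1 \<union> A2 \<union> A3) \<inter> A4 = {}"
    by fastforce+
  have "card (forests (Suc n) k (Suc h)) = card A1 + card A2 + card A3 + card A4"
    by (simp add: forests_Suc_Suc A1_def [symmetric] A2_def [symmetric] A3_def [symmetric]
        A4_def [symmetric] card_Un_disjoint finite disjoint)
  also have "\<dots> = (if k = 0 then 0 else card (forests n (k - 1) h))
     + 2 * card (forests n k (Suc h)) + card (forests n k (Suc (Suc h)))"
    by (simp add: A1_def A2_def A3_def A4_def card_image inj_on_cons_edge inj_on_plant_first
        inj_on_add_young_leaf inj_on_graft_second)
  finally show ?thesis .
qed

fun pow2_binom :: "nat \<Rightarrow> nat \<Rightarrow> nat" where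
  "pow2_binom 0 s = 1"
| "pow2_binom (Suc L) 0 = 0"
| "pow2_binom (Suc L) (Suc s) = 2 * pow2_binom L (Suc s) + pow2_binom (Suc L) s"

lemma pow2_binom_eq: "pow2_binom L (Suc s) = 2 ^ L * (L + s choose L)"
proof (induction L arbitrary: s)
  case 0
  then show ?case by simp
next
  case (Suc L)
  then show ?case by (induction s) (simp_all add: algebra_simps)
qed

lemma pow2_binom_Suc_right:
  "pow2_binom L (Suc s) = 2 * (case L of 0 \<Rightarrow> 0 | Suc L' \<Rightarrow> pow2_binom L' (Suc s)) + pow2_binom L s"
  by (cases L; cases s) simp_all

(* Paths of unit steps from height h, with d up-steps and h + d down-steps,
   that reach 0 only at their end. *)
function ballot :: "nat \<Rightarrow> nat \<Rightarrow> nat" where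
  "ballot h 0 = 1"
| "ballot 0 (Suc d) = 0"
| "ballot (Suc h) (Suc d) = ballot h (Suc d) + ballot (Suc (Suc h)) d"
  by pat_completeness auto
termination by (relation "measure (\<lambda>(h, d). h + 2 * d)") auto

lemma ballot_Suc_left:
  "ballot (Suc h) d = ballot h d + (case d of 0 \<Rightarrow> 0 | Suc d' \<Rightarrow> ballot (Suc (Suc h)) d')"
  by (cases d) simp_all

lemma ballot_eq:
  "1 \<le> h \<Longrightarrow> int (ballot h d) =
     int (h + 2 * d - 1 choose d) - (if d = 0 then 0 else int (h + 2 * d - 1 choose (d - 1)))"
proof (induction h d rule: ballot.induct)
  case (3 h d)
  show ?case
  proof (cases "h = 0")
    case True
    have "Suc (2 * d) choose Suc d = Suc (2 * d) choose d"
      using binomial_symmetric[of d "Suc (2 * d)"] by simp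
    then show ?thesis using 3 True by (cases d) (auto simp: algebra_simps)
  next
    case False
    then show ?thesis using 3 by (cases d) (auto simp: algebra_simps)
  qed
qed simp_all

lemma Suc_times_ballot_1: "Suc d * ballot 1 d = 2 * d choose d"
proof (cases d)
  case (Suc i)
  define a where "a = int (2 * i + 2 choose Suc i)"
  define b where "b = int (2 * i + 2 choose i)"
  have "(i + 2) * (2 * i + 2 choose i) = (2 * i + 2) * (2 * i + 1 choose i)"
    using binomial_absorb_comp[of "2 * i + 2" i] by simp
  also have "\<dots> = (i + 1) * (2 * i + 2 choose Suc i)"
    using binomial_absorption[of i "2 * i + 2"] by simp
  finally have ab: "int (i + 2) * b = int (i + 1) * a"
    unfolding a_def b_def by (metis of_nat_mult)
  have "int (ballot 1 d) = a - b"
    using ballot_eq[of 1 d] Suc by (simp add: a_def b_def del: binomial_Suc_Suc)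
  then have "int (Suc d * ballot 1 d) = int (i + 2) * (a - b)"
    using Suc by (simp only: of_nat_mult) simp
  also have "\<dots> = a"
    using ab by (simp add: algebra_simps)
  finally have "int (Suc d * ballot 1 d) = int (2 * d choose d)"
    using Suc by (simp add: a_def del: ballot.simps binomial_Suc_Suc)
  then show ?thesis
    by (simp only: of_nat_eq_iff)
qed simp

(* Unfolding the recurrence of card_forests_Suc_Suc down to the empty forest
   takes n steps: 2k - h of them change h by one and form a ballot path, the
   remaining L = n - (2k - h) keep h and k fixed and have weight 2. *)
definition forest_count :: "nat \<Rightarrow> nat \<Rightarrow> nat \<Rightarrow> nat" where
  "forest_count n k h =
     (if h \<le> k \<and> 2 * k - h \<le> n
      then pow2_binom (n - (2 * k - h)) (2 * k - h) * ballot h (k - h) else 0)"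

lemma forest_count_0: "forest_count 0 k h = (if h = 0 \<and> k = 0 then 1 else 0)"
  by (auto simp: forest_count_def)

lemma forest_count_Suc_0: "forest_count (Suc n) k 0 = 0"
  by (cases k) (auto simp: forest_count_def)

lemma forest_count_Suc_Suc:
  "forest_count (Suc n) k (Suc h) =
     (if k = 0 then 0 else forest_count n (k - 1) h)
     + 2 * forest_count n k (Suc h) + forest_count n k (Suc (Suc h))"
proof (cases "Suc h \<le> k \<and> Suc h + 2 * (k - Suc h) \<le> Suc n")
  case False
  then have "\<not> (h \<le> k - 1 \<and> 2 * (k - 1) - h \<le> n)" "\<not> (Suc h \<le> k \<and> 2 * k - Suc h \<le> n)"
    "\<not> (Suc (Suc h) \<le> k \<and> 2 * k - Suc (Suc h) \<le> n)" if "k \<noteq> 0"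
    using that by linarith+
  then show ?thesis
    unfolding forest_count_def using False by auto
next
  case True
  define d where "d = k - Suc h"
  define L where "L = Suc n - (Suc h + 2 * d)"
  define s where "s = h + 2 * d"
  have k: "k = Suc h + d" and n: "Suc n = Suc s + L"
    using True by (simp_all add: d_def L_def s_def)
  have "forest_count (Suc n) k (Suc h) = pow2_binom L (Suc s) * ballot (Suc h) d"
    using n k s_def by (simp add: forest_count_def)
  also have "\<dots> = 2 * (case L of 0 \<Rightarrow> 0 | Suc L' \<Rightarrow> pow2_binom L' (Suc s)) * ballot (Suc h) d
      + pow2_binom L s * (ballot h d + (case d of 0 \<Rightarrow> 0 | Suc d' \<Rightarrow> ballot (Suc (Suc h)) d'))"
    by (subst pow2_binom_Suc_right) (simp only: distrib_right ballot_Suc_left[of h d, symmetric])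
  also have "\<dots> = forest_count n (k - 1) h + 2 * forest_count n k (Suc h)
      + forest_count n k (Suc (Suc h))"
  proof -
    have "forest_count n (k - 1) h = pow2_binom L s * ballot h d"
      using n k s_def by (simp add: forest_count_def)
    moreover have "forest_count n k (Suc h) =
        (case L of 0 \<Rightarrow> 0 | Suc L' \<Rightarrow> pow2_binom L' (Suc s)) * ballot (Suc h) d"
      using n k s_def by (cases L) (simp_all add: forest_count_def)
    moreover have "forest_count n k (Suc (Suc h)) =
        pow2_binom L s * (case d of 0 \<Rightarrow> 0 | Suc d' \<Rightarrow> ballot (Suc (Suc h)) d')"
      using n k s_def by (cases d) (simp_all add: forest_count_def)
    ultimately show ?thesis
      by (simp add: algebra_simps)
  qed
  finally show ?thesis
    using k by simp
qed

lemma card_forests: "card (forests n k h) = forest_count n k h"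
proof (induction n arbitrary: k h)
  case 0
  then show ?case by (simp add: forests_0 forest_count_0)
next
  case (Suc n)
  then show ?case
    by (cases h) (simp_all add: forests_Suc_0 forest_count_Suc_0 card_forests_Suc_Suc
        forest_count_Suc_Suc)
qed

lemma forests_1:
  assumes "1 \<le> n"
  shows "forests n k 1 = (\<lambda>t. [t]) ` {t. edges t = n \<and> old_leaves t = k}"
proof -
  have "Node [] \<noteq> t" if "edges t = n" for t
    using that assms by auto
  then show ?thesis
    by (auto simp: forests_def length_Suc_conv)
qed

lemma finite_card_trees:
  assumes "1 \<le> n"
  shows "finite {t. edges t = n \<and> old_leaves t = k}"
    and "card {t. edges t = n \<and> old_leaves t = k} = forest_count n k 1"
proof -
  let ?T = "{t. edges t = n \<and> old_leaves t = k}"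
  have inj: "inj_on (\<lambda>t. [t]) ?T"
    by (simp add: inj_on_def)
  have image: "(\<lambda>t. [t]) ` ?T = forests n k 1"
    using forests_1[OF assms] by simp
  have "finite ((\<lambda>t. [t]) ` ?T)"
    unfolding image by (rule finite_forests)
  then show "finite ?T"
    by (simp add: finite_image_iff inj)
  have "card ?T = card (forests n k 1)"
    unfolding image [symmetric] by (simp add: card_image inj)
  then show "card ?T = forest_count n k 1"
    by (simp add: card_forests)
qed

lemma forest_count_1:
  assumes "1 \<le> n" and "1 \<le> k"
  shows "k * forest_count n k 1 =
    2 ^ (n - (2 * k - 1)) * ((n - 1) choose (2 * k - 2)) * ((2 * k - 2) choose (k - 1))"
proof -
  obtain j where k: "k = Suc j"
    using assms(2) by (cases k) auto
  have "Suc j * forest_count n (Suc j) 1 =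
    2 ^ (n - Suc (2 * j)) * ((n - 1) choose (2 * j)) * ((2 * j) choose j)"
  proof (cases "Suc (2 * j) \<le> n")
    case True
    define L where "L = n - Suc (2 * j)"
    then have n: "n = L + Suc (2 * j)"
      using True by simp
    have "forest_count n (Suc j) 1 = pow2_binom L (Suc (2 * j)) * ballot 1 j"
      using n by (simp add: forest_count_def)
    also have "\<dots> = 2 ^ L * ((n - 1) choose (2 * j)) * ballot 1 j"
      using n binomial_symmetric[of "2 * j" "L + 2 * j"]
      by (simp add: pow2_binom_eq add.commute)
    finally have "Suc j * forest_count n (Suc j) 1 =
        2 ^ L * ((n - 1) choose (2 * j)) * (Suc j * ballot 1 j)"
      by (simp only: mult_ac)
    then show ?thesis
      using n by (simp only: Suc_times_ballot_1 diff_add_inverse2)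
  next
    case False
    then show ?thesis
      using assms(1) by (simp add: forest_count_def binomial_eq_0)
  qed
  then show ?thesis
    using k by simp
qed

lemma powi_diff_times_choose:
  fixes x :: real
  assumes "1 \<le> n" and "1 \<le> m"
  shows "x powi (int n - int m) * real ((n - 1) choose (m - 1))
    = x ^ (n - m) * real ((n - 1) choose (m - 1))"
proof (cases "m \<le> n")
  case True
  then have "int n - int m = int (n - m)"
    by simp
  then show ?thesis
    by (simp only: power_int_of_nat)
next
  case False
  then show ?thesis
    using assms by (simp add: binomial_eq_0)
qed

theorem mainTheorem3:
  fixes n k :: nat
  assumes "n \<ge> 1" and "k \<ge> 1"
  shows "finite {t. edges t = n \<and> old_leaves t = k}
    \<and> real (card {t. edges t = n \<and> old_leaves t = k})
      = (2::real) powi (int n - 2 * int k + 1) / real k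
        * real ((n - 1) choose (2 * k - 2)) * real ((2 * k - 2) choose (k - 1))"
proof -
  let ?T = "{t. edges t = n \<and> old_leaves t = k}"
  have "real (k * card ?T) = real (2 ^ (n - (2 * k - 1)) * ((n - 1) choose (2 * k - 2))
      * ((2 * k - 2) choose (k - 1)))"
    using forest_count_1[OF assms] finite_card_trees(2)[OF assms(1)] by simp
  then have count: "real k * real (card ?T) = 2 ^ (n - (2 * k - 1))
      * real ((n - 1) choose (2 * k - 2)) * real ((2 * k - 2) choose (k - 1))"
    by (simp only: of_nat_mult of_nat_power of_nat_numeral)
  have exponent: "int n - 2 * int k + 1 = int n - int (2 * k - 1)"
    and index: "2 * k - 2 = 2 * k - 1 - 1" and odd: "1 \<le> 2 * k - 1"
    using assms(2) by simp_all
  have power: "(2::real) powi (int n - 2 * int k + 1) * real ((n - 1) choose (2 * k - 2))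
      = 2 ^ (n - (2 * k - 1)) * real ((n - 1) choose (2 * k - 2))"
    unfolding exponent index by (rule powi_diff_times_choose[OF assms(1) odd])
  have "(2::real) powi (int n - 2 * int k + 1) / real k
      * real ((n - 1) choose (2 * k - 2)) * real ((2 * k - 2) choose (k - 1))
    = real k * real (card ?T) / real k"
    unfolding count power [symmetric] by (simp only: mult_ac times_divide_eq_left times_divide_eq_right)
  then show ?thesis
    using finite_card_trees(1)[OF assms(1)] assms(2) by simp
qed
end
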